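(* Let $q\in\mathbb{C}\setminus\{0\}$ and assume $q^{2j}\neq1$ for $2\le j\le n$. Then the idempotents $p_{(n)}$ and $p_{(1^n)}$ of the Hecke algebra $H_n\subset G_n[0]$ are minimal idempotents of $G_n[0]$, i.e. $p\,G_n[0]\,p=\mathbb{C}p$ for $p\in\{p_{(n)},p_{(1^n)}\}$.
   Context: For $q\in\mathbb{C}\setminus\{0\}$ the Hecke–Clifford algebra $G_n$ is the complex algebra generated by $t_1,\dots,t_{n-1}$ and $v_1,\dots,v_n$ subject to: braid relations $t_jt_{j+1}t_j=t_{j+1}t_jt_{j+1}$, $t_it_j=t_jt_i$ ($|i-j|\ge2$); $t_j-t_j^{-1}=q-q^{-1}$; $v_jv_k+v_kv_j=2\delta_{jk}$; $t_jv_j=v_{j+1}t_j$, $t_jv_{j+1}=v_jt_j-(q-q^{-1})(v_j-v_{j+1})$, $t_jv_l=v_lt_j$ for $l\neq j,j+1$. $G_n[0]$ is the subalgebra fixed by the automorphism $v_j\mapsto -v_j$, $t_j\mapsto t_j$. $H_n\subset G_n[0]$ is the subalgebra generated by the $t_j$ (the Hecke algebra of type $A_{n-1}$). Under the assumption $q^{2j}\neq 1$ for $2\le j\le n$, $H_n$ has minimal central idempotents $p_{(n)}$ and $p_{(1^n)}$ characterized by $t_jp_{(n)}=qp_{(n)}$ and $t_jp_{(1^n)}=-q^{-1}p_{(1^n)}$ for all $1\le j<n$. *)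

theory Defs
  imports Complex_Main
begin

text \<open>A complex algebra: a unital ring 'a together with a unital ring homomorphism
  sc from the complex numbers into the centre of 'a (scalar multiplication is
  c x = sc c * x).\<close>
definition cplx_alg :: "(complex \<Rightarrow> 'a::ring_1) \<Rightarrow> bool" where
  "cplx_alg sc \<longleftrightarrow> sc 1 = 1 \<and> (\<forall>a b. sc (a + b) = sc a + sc b)
     \<and> (\<forall>a b. sc (a * b) = sc a * sc b) \<and> (\<forall>a x. sc a * x = x * sc a)"

definition hc_rels :: "(complex \<Rightarrow> 'a::ring_1) \<Rightarrow> complex \<Rightarrow> nat \<Rightarrow> (nat \<Rightarrow> 'a) \<Rightarrow> (nat \<Rightarrow> 'a) \<Rightarrow> bool" where
  "hc_rels sc q n t v \<longleftrightarrow>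
     (\<forall>j. 1 \<le> j \<and> j + 1 < n \<longrightarrow> t j * t (j+1) * t j = t (j+1) * t j * t (j+1)) \<and>
     (\<forall>i j. 1 \<le> i \<and> i < n \<and> 1 \<le> j \<and> j < n \<and> (i + 2 \<le> j \<or> j + 2 \<le> i) \<longrightarrow> t i * t j = t j * t i) \<and>
     (\<forall>j. 1 \<le> j \<and> j < n \<longrightarrow> (\<exists>u. t j * u = 1 \<and> u * t j = 1 \<and> t j - u = sc (q - inverse q))) \<and>
     (\<forall>j k. 1 \<le> j \<and> j \<le> n \<and> 1 \<le> k \<and> k \<le> n \<longrightarrow>
         v j * v k + v k * v j = (if j = k then 2 else 0)) \<and>
     (\<forall>j. 1 \<le> j \<and> j < n \<longrightarrow> t j * v j = v (j+1) * t j) \<and>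
     (\<forall>j. 1 \<le> j \<and> j < n \<longrightarrow> t j * v (j+1) = v j * t j - sc (q - inverse q) * (v j - v (j+1))) \<and>
     (\<forall>j l. 1 \<le> j \<and> j < n \<and> 1 \<le> l \<and> l \<le> n \<and> l \<noteq> j \<and> l \<noteq> j + 1 \<longrightarrow> t j * v l = v l * t j)"

inductive_set hecke_part :: "(complex \<Rightarrow> 'a::ring_1) \<Rightarrow> nat \<Rightarrow> (nat \<Rightarrow> 'a) \<Rightarrow> 'a set"
  for sc n t where
  hp_scal: "sc c \<in> hecke_part sc n t"
| hp_gen: "1 \<le> j \<Longrightarrow> j < n \<Longrightarrow> t j \<in> hecke_part sc n t"
| hp_add: "x \<in> hecke_part sc n t \<Longrightarrow> y \<in> hecke_part sc n t \<Longrightarrow> x + y \<in> hecke_part sc n t"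
| hp_mult: "x \<in> hecke_part sc n t \<Longrightarrow> y \<in> hecke_part sc n t \<Longrightarrow> x * y \<in> hecke_part sc n t"

text \<open>The even part G_n[0]: the subalgebra generated by the t_j and the products
  v_j v_k, i.e. the span of all words with an even number of Clifford generators
  (= the fixed points of v_j \<mapsto> -v_j, t_j \<mapsto> t_j).\<close>
inductive_set even_part :: "(complex \<Rightarrow> 'a::ring_1) \<Rightarrow> nat \<Rightarrow> (nat \<Rightarrow> 'a) \<Rightarrow> (nat \<Rightarrow> 'a) \<Rightarrow> 'a set"
  for sc n t v where
  ep_scal: "sc c \<in> even_part sc n t v"
| ep_t: "1 \<le> j \<Longrightarrow> j < n \<Longrightarrow> t j \<in> even_part sc n t v"
| ep_vv: "1 \<le> j \<Longrightarrow> j \<le> n \<Longrightarrow> 1 \<le> k \<Longrightarrow> k \<le> n \<Longrightarrow> v j * v k \<in> even_part sc n t v"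
| ep_add: "x \<in> even_part sc n t v \<Longrightarrow> y \<in> even_part sc n t v \<Longrightarrow> x + y \<in> even_part sc n t v"
| ep_mult: "x \<in> even_part sc n t v \<Longrightarrow> y \<in> even_part sc n t v \<Longrightarrow> x * y \<in> even_part sc n t v"

end

(*
  First, p is also a right q-eigenvector of every t_j.  The q-symmetrizer S of H_n satisfies
  S t_j = q S, hence S h is a multiple of S for every h in H_n; on the other hand S p is p times the
  product of the q^2-integers [1][2]...[n], which is nonzero by the hypothesis on q.  So p is a
  multiple of S.

  Second, G_n[0] p is spanned by the elements v_w p for words w of even length in the Clifford
  generators, so it suffices to show that p v_w p is a multiple of p.  A repeated letter cancels by
  anticommutation.  If l occurs in w but l - 1 does not, conjugating with t_(l-1), which acts on p
  by q from both sides, replaces l by l - 1.  What remains are words containing 1 and 2, and the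
  relations between t_1 and v_1 v_2 give (q + q^-1) p v_1 v_2 v_r p = (q - q^-1) p v_r p.

  The idempotent p_(1^n) is the idempotent p_(n) for the parameter -q^-1, which gives the same
  relations.
*)
theory Submission
  imports Defs
begin

lemma geometric_sum_atMost_nonzero:
  fixes x :: complex
  assumes "\<forall>j. 2 \<le> j \<and> j \<le> Suc m \<longrightarrow> x ^ j \<noteq> 1"
  shows "(\<Sum>i\<le>m. x ^ i) \<noteq> 0"
proof (cases "x = 1")
  case True
  then show ?thesis
    using of_nat_neq_0[of m, where 'a = complex] by (simp add: add.commute)
next
  case False
  have "x ^ Suc m \<noteq> 1"
    using assms[rule_format, of "Suc m"] False by (cases m) auto
  then show ?thesis
    using geometric_sum[OF False, of "Suc m"] False by (simp add: lessThan_Suc_atMost)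
qed

lemma plus_inverse_nonzero:
  fixes q :: complex
  assumes "q \<noteq> 0" and "q ^ 4 \<noteq> 1"
  shows "q + inverse q \<noteq> 0"
proof
  assume "q + inverse q = 0"
  then have "q * q = -1"
    using assms(1) by (simp add: field_simps add_eq_0_iff2 minus_equation_iff)
  then have "q ^ 4 = 1"
    by (simp add: power4_eq_xxxx mult.assoc)
  with assms(2) show False ..
qed

lemma sum_list_map_less:
  fixes xs :: "nat list"
  assumes "\<And>x. x \<in> set xs \<Longrightarrow> f x \<le> x" and "a \<in> set xs" and "f a < a"
  shows "sum_list (map f xs) < sum_list xs"
proof -
  have "sum_list (map f (remove1 a xs)) \<le> sum_list (map id (remove1 a xs))"
    using assms(1) set_remove1_subset by (intro sum_list_mono) fastforce
  then show ?thesis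
    using assms(2,3) sum_list_map_remove1[OF assms(2), of f] sum_list_map_remove1[OF assms(2), of id]
    by simp
qed

lemma one_two_mem_if_downward_closed:
  fixes w :: "nat list"
  assumes "distinct w" and "2 \<le> length w" and "0 \<notin> set w"
    and closed: "\<forall>l\<in>set w. 2 \<le> l \<longrightarrow> l - 1 \<in> set w"
  shows "1 \<in> set w" and "2 \<in> set w"
proof -
  have down: "k \<in> set w" if "m \<in> set w" "1 \<le> k" "k \<le> m" for m k
    using that
  proof (induction m)
    case (Suc m)
    then show ?case
      using closed by (cases "k = Suc m") auto
  qed simp
  obtain a b rest where "w = a # b # rest"
    using assms(2) by (auto simp: numeral_2_eq_2 Suc_le_length_iff)
  then have "max a b \<in> set w" "2 \<le> max a b"
    using assms(1,3) by (auto simp: max_def)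
  then show "1 \<in> set w" "2 \<in> set w"
    using down by auto
qed

locale complex_algebra =
  fixes sc :: "complex \<Rightarrow> 'a::ring_1"
  assumes cplx_alg: "cplx_alg sc"
begin

lemma sc_1 [simp]: "sc 1 = 1"
  and sc_add: "sc (a + b) = sc a + sc b"
  and sc_mult: "sc (a * b) = sc a * sc b"
  and sc_commute: "sc a * x = x * sc a"
  using cplx_alg unfolding cplx_alg_def by blast+

lemma sc_0 [simp]: "sc 0 = 0"
  using sc_add[of 0 0] by simp

lemma sc_minus: "sc (- a) = - sc a"
  using sc_add[of a "- a"] by (simp add: add_eq_0_iff2)

lemma sc_diff: "sc (a - b) = sc a - sc b"
  using sc_add[of a "- b"] by (simp add: sc_minus)

lemma sc_2: "sc 2 = 2"
  using sc_add[of 1 1] by (simp add: one_add_one)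

lemma sc_sc_mult: "sc a * (sc b * x) = sc (a * b) * x"
  by (simp add: sc_mult mult.assoc)

lemma mult_sc_left_commute: "x * (sc a * y) = sc a * (x * y)"
  by (metis mult.assoc sc_commute)

lemma sc_mult_add: "sc a * x + sc b * x = sc (a + b) * x"
  by (simp add: sc_add distrib_right)

lemma sc_sum: "(\<Sum>i\<in>A. sc (c i) * x) = sc (\<Sum>i\<in>A. c i) * x"
  by (induction A rule: infinite_finite_induct) (simp_all add: sc_mult_add)

lemma sc_inverse_cancel: "c \<noteq> 0 \<Longrightarrow> sc (inverse c) * (sc c * x) = x"
  by (simp add: sc_sc_mult)

lemma sc_cancel: "c \<noteq> 0 \<Longrightarrow> sc c * x = sc c * y \<Longrightarrow> x = y"
  by (metis sc_inverse_cancel)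

lemma square_eq_if_right_inverse_diff:
  assumes "x * u = 1" and "x - u = sc c"
  shows "x * x = sc c * x + 1"
proof -
  have "x * (x - sc c) = 1"
    using assms by (simp add: algebra_simps)
  then show ?thesis
    by (simp add: right_diff_distrib sc_commute algebra_simps)
qed

lemma quadratic_pair_eigen:
  assumes "c \<noteq> 0" and "x * s = y" and "y * s = sc (c - inverse c) * y + x"
  shows "(x + sc c * y) * s = sc c * (x + sc c * y)"
proof -
  have "c * (c - inverse c) + 1 = c * c"
    using assms(1) by (simp add: field_simps)
  then have "sc c * (sc (c - inverse c) * y) + y = sc c * (sc c * y)"
    by (metis sc_sc_mult sc_mult_add sc_1 mult_1)
  then show ?thesis
    using assms(2,3) by (simp add: distrib_right distrib_left mult.assoc add_ac)
qed

definition complex_line :: "'a \<Rightarrow> 'a set" where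
  "complex_line p = range (\<lambda>c. sc c * p)"

lemma complex_line_iff: "y \<in> complex_line p \<longleftrightarrow> (\<exists>c. y = sc c * p)"
  unfolding complex_line_def by auto

lemma self_in_complex_line: "p \<in> complex_line p"
  unfolding complex_line_iff by (metis sc_1 mult_1)

lemma sc_mult_in_complex_line: "y \<in> complex_line p \<Longrightarrow> sc c * y \<in> complex_line p"
  unfolding complex_line_iff by (auto simp: sc_sc_mult)

lemma add_in_complex_line: "x \<in> complex_line p \<Longrightarrow> y \<in> complex_line p \<Longrightarrow> x + y \<in> complex_line p"
  unfolding complex_line_iff by (auto simp: sc_mult_add)

end

locale hecke = complex_algebra sc for sc :: "complex \<Rightarrow> 'a::ring_1" +
  fixes q :: complex and n :: nat and t :: "nat \<Rightarrow> 'a"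
  assumes q_nonzero: "q \<noteq> 0"
    and braid: "1 \<le> j \<Longrightarrow> j + 1 < n \<Longrightarrow> t j * t (j + 1) * t j = t (j + 1) * t j * t (j + 1)"
    and far_commute: "1 \<le> i \<Longrightarrow> i + 2 \<le> j \<Longrightarrow> j < n \<Longrightarrow> t i * t j = t j * t i"
    and quadratic: "1 \<le> j \<Longrightarrow> j < n \<Longrightarrow> t j * t j = sc (q - inverse q) * t j + 1"
begin

abbreviation \<delta> :: complex where "\<delta> \<equiv> q - inverse q"

lemma mult_hecke_part_in_complex_line:
  assumes "\<And>j. 1 \<le> j \<Longrightarrow> j < n \<Longrightarrow> y * t j \<in> complex_line y"
  shows "h \<in> hecke_part sc n t \<Longrightarrow> y * h \<in> complex_line y"
proof (induction rule: hecke_part.induct)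
  case (hp_scal c)
  then show ?case
    by (simp add: sc_commute[symmetric] sc_mult_in_complex_line self_in_complex_line)
next
  case (hp_gen j)
  then show ?case by (rule assms)
next
  case (hp_add x z)
  then show ?case by (simp add: distrib_left add_in_complex_line)
next
  case (hp_mult x z)
  then obtain c where "y * x = sc c * y"
    by (auto simp: complex_line_iff)
  then have "y * (x * z) = sc c * (y * z)"
    by (metis mult.assoc)
  then show ?case
    using hp_mult.IH(2) by (simp add: sc_mult_in_complex_line)
qed

text \<open>The elements \<open>tdown k i\<close>, \<open>i \<le> k\<close>, are the minimal coset representatives of \<open>H\<^sub>k\<close>
  in \<open>H\<^sub>k\<^sub>+\<^sub>1\<close>, so \<open>symmetrizer k\<close> is the \<open>q\<close>-symmetrizer \<open>\<Sum>\<^sub>w q\<^bsup>\<ell>(w)\<^esup> t\<^sub>w\<close> of \<open>H\<^sub>k\<close>.\<close>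

fun tdown :: "nat \<Rightarrow> nat \<Rightarrow> 'a" where
  "tdown k 0 = 1"
| "tdown k (Suc i) = tdown k i * t (k - i)"

definition coset_sum :: "nat \<Rightarrow> 'a" where
  "coset_sum k = (\<Sum>i\<le>k. sc (q ^ i) * tdown k i)"

fun symmetrizer :: "nat \<Rightarrow> 'a" where
  "symmetrizer 0 = 1"
| "symmetrizer (Suc k) = symmetrizer k * coset_sum k"

lemma tdown_commute: "1 \<le> j \<Longrightarrow> i + j < k \<Longrightarrow> k < n \<Longrightarrow> tdown k i * t j = t j * tdown k i"
proof (induction i)
  case (Suc i)
  have "t (k - i) * t j = t j * t (k - i)"
    using Suc.prems far_commute[of j "k - i"] by simp
  then show ?case
    using Suc by (simp add: mult.assoc) (metis mult.assoc)
qed simp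

lemma tdown_quadratic:
  "i + j = k \<Longrightarrow> 1 \<le> j \<Longrightarrow> k < n \<Longrightarrow> tdown k (Suc i) * t j = sc \<delta> * tdown k (Suc i) + tdown k i"
proof -
  assume "i + j = k" "1 \<le> j" "k < n"
  then have "k - i = j" and "t j * t j = sc \<delta> * t j + 1"
    by (auto simp: quadratic)
  then show ?thesis
    by (simp add: mult.assoc distrib_left mult_sc_left_commute)
qed

lemma tdown_braid:
  "1 \<le> j \<Longrightarrow> j \<le> k \<Longrightarrow> i \<le> k \<Longrightarrow> k + 2 \<le> i + j \<Longrightarrow> k < n \<Longrightarrow>
    tdown k i * t j = t (j - 1) * tdown k i"
proof (induction i)
  case (Suc i)
  show ?case
  proof (cases "i + j = k + 1")
    case True
    then obtain i0 where i0: "i = Suc i0" and j: "k - i0 = j" "k - i = j - 1" "2 \<le> j"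
      using Suc.prems by (cases i) auto
    have "t (j - 1) * t j * t (j - 1) = t j * t (j - 1) * t j"
      using braid[of "j - 1"] Suc.prems j by simp
    moreover have "tdown k i0 * t (j - 1) = t (j - 1) * tdown k i0"
      using tdown_commute[of "j - 1" i0 k] Suc.prems True i0 by simp
    ultimately show ?thesis
      using i0 j by (simp add: mult.assoc) (metis mult.assoc)
  next
    case False
    then have "tdown k i * t j = t (j - 1) * tdown k i"
      using Suc by simp
    moreover have "t (k - i) * t j = t j * t (k - i)"
      using Suc.prems False far_commute[of "k - i" j] by simp
    ultimately show ?thesis
      by (simp add: mult.assoc) (metis mult.assoc)
  qed
qed simp

lemma mult_tdown_t:
  assumes y: "\<And>i. 1 \<le> i \<Longrightarrow> i < k \<Longrightarrow> y * t i = sc q * y"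
    and j: "1 \<le> j" "j \<le> k" and k: "k < n"
    and i: "i \<le> k" "i \<noteq> k - j" "i \<noteq> Suc (k - j)"
  shows "y * tdown k i * t j = sc q * (y * tdown k i)"
proof (cases "i < k - j")
  case True
  then have "tdown k i * t j = t j * tdown k i" and "y * t j = sc q * y"
    using j k y by (auto intro: tdown_commute)
  then show ?thesis
    by (metis mult.assoc)
next
  case False
  then have "tdown k i * t j = t (j - 1) * tdown k i"
    using j k i by (intro tdown_braid) auto
  moreover have "y * t (j - 1) = sc q * y"
    using j y i False by auto
  ultimately show ?thesis
    by (metis mult.assoc)
qed

text \<open>Only the two summands \<open>i = k - j\<close> and \<open>i = k - j + 1\<close> are not individually
  \<open>q\<close>-eigenvectors under right multiplication by \<open>t\<^sub>j\<close>; together they form one.\<close>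

lemma mult_coset_sum_t:
  assumes y: "\<And>i. 1 \<le> i \<Longrightarrow> i < k \<Longrightarrow> y * t i = sc q * y"
    and j: "1 \<le> j" "j \<le> k" and k: "k < n"
  shows "y * coset_sum k * t j = sc q * (y * coset_sum k)"
proof -
  define f where "f i = y * tdown k i" for i
  define a where "a = k - j"
  define R where "R = {..k} - {a, Suc a}"
  have a: "Suc a \<le> k" "k - a = j"
    using j unfolding a_def by auto
  have "f (Suc a) * t j = y * (tdown k (Suc a) * t j)"
    unfolding f_def by (simp only: mult.assoc)
  also have "\<dots> = sc \<delta> * f (Suc a) + f a"
    using tdown_quadratic[of a j k] a j k unfolding f_def
    by (simp add: distrib_left mult_sc_left_commute)
  finally have "(f a + sc q * f (Suc a)) * t j = sc q * (f a + sc q * f (Suc a))"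
    using a by (intro quadratic_pair_eigen q_nonzero) (simp_all add: f_def mult.assoc)
  then have pair: "sc (q ^ a) * (f a + sc q * f (Suc a)) * t j
      = sc q * (sc (q ^ a) * (f a + sc q * f (Suc a)))"
    by (simp add: mult.assoc sc_sc_mult mult.commute)
  have rest: "(\<Sum>i\<in>R. sc (q ^ i) * f i) * t j = sc q * (\<Sum>i\<in>R. sc (q ^ i) * f i)"
    unfolding sum_distrib_left sum_distrib_right
  proof (rule sum.cong)
    fix i
    assume "i \<in> R"
    then have "f i * t j = sc q * f i"
      unfolding f_def R_def a_def using mult_tdown_t[OF y j k, of i] by auto
    then show "sc (q ^ i) * f i * t j = sc q * (sc (q ^ i) * f i)"
      by (simp only: mult.assoc sc_sc_mult mult.commute)
  qed simp
  have "y * coset_sum k = (\<Sum>i\<in>R. sc (q ^ i) * f i) + sc (q ^ a) * (f a + sc q * f (Suc a))"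
    unfolding coset_sum_def f_def R_def sum_distrib_left
    using a by (subst sum.subset_diff[of "{a, Suc a}"])
      (auto simp: mult_sc_left_commute[of y] distrib_left sc_sc_mult mult.commute)
  then show ?thesis
    using rest pair by (simp add: distrib_right distrib_left)
qed

lemma symmetrizer_mult_t:
  "k \<le> n \<Longrightarrow> 1 \<le> j \<Longrightarrow> j < k \<Longrightarrow> symmetrizer k * t j = sc q * symmetrizer k"
proof (induction k arbitrary: j)
  case (Suc k)
  then show ?case
    using mult_coset_sum_t[of k "symmetrizer k" j] by simp
qed simp

context
  fixes p :: 'a
  assumes t_mult_p: "\<And>j. 1 \<le> j \<Longrightarrow> j < n \<Longrightarrow> t j * p = sc q * p"
begin

lemma tdown_mult_eigen: "i \<le> k \<Longrightarrow> k < n \<Longrightarrow> tdown k i * p = sc (q ^ i) * p"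
proof (induction i)
  case (Suc i)
  then have "tdown k (Suc i) * p = tdown k i * (sc q * p)"
    by (simp add: mult.assoc t_mult_p)
  also have "\<dots> = sc (q ^ Suc i) * p"
    using Suc by (simp add: mult_sc_left_commute[of "tdown k i"] sc_sc_mult mult.commute)
  finally show ?case .
qed simp

lemma coset_sum_mult_eigen: "k < n \<Longrightarrow> coset_sum k * p = sc (\<Sum>i\<le>k. (q\<^sup>2) ^ i) * p"
  unfolding coset_sum_def sum_distrib_right sc_sum[symmetric]
  by (intro sum.cong) (simp_all add: mult.assoc tdown_mult_eigen sc_sc_mult power2_eq_square power_mult_distrib)

lemma symmetrizer_mult_eigen:
  "k \<le> n \<Longrightarrow> symmetrizer k * p = sc (\<Prod>m<k. \<Sum>i\<le>m. (q\<^sup>2) ^ i) * p"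
proof (induction k)
  case (Suc k)
  then have "symmetrizer (Suc k) * p = symmetrizer k * (sc (\<Sum>i\<le>k. (q\<^sup>2) ^ i) * p)"
    by (simp add: mult.assoc coset_sum_mult_eigen)
  then show ?case
    using Suc by (simp add: mult_sc_left_commute[of "symmetrizer k"] sc_sc_mult mult.commute)
qed simp

lemma mult_t_eq_if_t_mult_eq:
  assumes generic: "\<forall>j. 2 \<le> j \<and> j \<le> n \<longrightarrow> q ^ (2 * j) \<noteq> 1"
    and p_hecke: "p \<in> hecke_part sc n t" and j: "1 \<le> j" "j < n"
  shows "p * t j = sc q * p"
proof -
  define c where "c = (\<Prod>m<n. \<Sum>i\<le>m. (q\<^sup>2) ^ i)"
  have "(\<Sum>i\<le>m. (q\<^sup>2) ^ i) \<noteq> 0" if "m < n" for m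
    using generic that by (intro geometric_sum_atMost_nonzero) (auto simp flip: power_mult)
  then have "c \<noteq> 0"
    unfolding c_def by simp
  moreover have "symmetrizer n * p = sc c * p"
    unfolding c_def by (simp add: symmetrizer_mult_eigen)
  moreover have "symmetrizer n * p \<in> complex_line (symmetrizer n)"
    using symmetrizer_mult_t by (intro mult_hecke_part_in_complex_line[OF _ p_hecke]) (auto simp: complex_line_iff)
  then obtain d where "symmetrizer n * p = sc d * symmetrizer n"
    by (auto simp: complex_line_iff)
  ultimately have p_eq: "p = sc (inverse c * d) * symmetrizer n"
    by (metis sc_inverse_cancel sc_sc_mult)
  have "p * t j = sc (inverse c * d) * (symmetrizer n * t j)"
    by (subst p_eq) (simp add: mult.assoc)
  also have "\<dots> = sc q * p"
    using symmetrizer_mult_t[of n j] j by (subst p_eq) (simp add: sc_sc_mult mult.commute)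
  finally show ?thesis .
qed

end

end

locale hecke_clifford = hecke sc q n t for sc :: "complex \<Rightarrow> 'a::ring_1" and q n t +
  fixes v :: "nat \<Rightarrow> 'a"
  assumes clifford: "1 \<le> j \<Longrightarrow> j \<le> n \<Longrightarrow> 1 \<le> k \<Longrightarrow> k \<le> n \<Longrightarrow>
      v j * v k + v k * v j = (if j = k then 2 else 0)"
    and t_v: "1 \<le> j \<Longrightarrow> j < n \<Longrightarrow> t j * v j = v (Suc j) * t j"
    and t_v_Suc: "1 \<le> j \<Longrightarrow> j < n \<Longrightarrow>
      t j * v (Suc j) = v j * t j - sc (q - inverse q) * (v j - v (Suc j))"
    and t_v_commute: "1 \<le> j \<Longrightarrow> j < n \<Longrightarrow> 1 \<le> l \<Longrightarrow> l \<le> n \<Longrightarrow> l \<noteq> j \<Longrightarrow> l \<noteq> Suc j \<Longrightarrow>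
      t j * v l = v l * t j"
begin

lemma v_square: "1 \<le> j \<Longrightarrow> j \<le> n \<Longrightarrow> v j * v j = 1"
  using clifford[of j j] sc_cancel[of 2 "v j * v j" 1] by (simp add: sc_2 mult_2)

lemma v_anticommute: "1 \<le> j \<Longrightarrow> j \<le> n \<Longrightarrow> 1 \<le> k \<Longrightarrow> k \<le> n \<Longrightarrow> j \<noteq> k \<Longrightarrow> v j * v k = - (v k * v j)"
  using clifford[of j k] by (simp add: eq_neg_iff_add_eq_0)

definition vword :: "nat list \<Rightarrow> 'a" where
  "vword w = prod_list (map v w)"

lemma vword_Nil [simp]: "vword [] = 1"
  and vword_Cons [simp]: "vword (a # w) = v a * vword w"
  and vword_append [simp]: "vword (u @ w) = vword u * vword w"
  by (simp_all add: vword_def)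

lemma vword_mult_v:
  "a \<notin> set u \<Longrightarrow> set (a # u) \<subseteq> {1..n} \<Longrightarrow> vword u * v a = sc ((-1) ^ length u) * (v a * vword u)"
proof (induction u)
  case (Cons b u)
  then have "vword (b # u) * v a = sc ((-1) ^ length u) * ((v b * v a) * vword u)"
    by (simp add: mult.assoc mult_sc_left_commute[of "v b"])
  also have "\<dots> = sc ((-1) ^ length (b # u)) * (v a * vword (b # u))"
    using Cons.prems v_anticommute[of b a] by (simp add: mult.assoc sc_minus)
  finally show ?case .
qed simp

lemma vword_remove1:
  assumes "set w \<subseteq> {1..n}" and "a \<in> set w"
  shows "\<exists>c. vword w = sc c * (v a * vword (remove1 a w))"
proof -
  obtain u r where w: "w = u @ a # r" and a: "a \<notin> set u"
    using split_list_first[OF assms(2)] by blast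
  then have "vword w = (vword u * v a) * vword r"
    by (simp add: mult.assoc)
  also have "\<dots> = sc ((-1) ^ length u) * (v a * vword (remove1 a w))"
    using a assms(1) w by (simp add: vword_mult_v remove1_append mult.assoc)
  finally show ?thesis ..
qed

lemma vword_not_distinct:
  assumes "set w \<subseteq> {1..n}" and "\<not> distinct w"
  shows "\<exists>c w'. vword w = sc c * vword w' \<and> set w' \<subseteq> set w \<and> length w' + 2 = length w"
proof -
  obtain xs y ys zs where w: "w = xs @ [y] @ ys @ [y] @ zs"
    using not_distinct_decomp[OF assms(2)] by blast
  define r where "r = ys @ y # zs"
  obtain c where r: "vword r = sc c * (v y * vword (remove1 y r))"
    using vword_remove1[of r y] assms(1) unfolding w r_def by auto
  have "v y * v y = 1"
    using assms(1) w by (intro v_square) auto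
  have "vword w = vword xs * (v y * vword r)"
    unfolding w r_def by simp
  also have "\<dots> = sc c * (vword xs * ((v y * v y) * vword (remove1 y r)))"
    unfolding r by (simp only: mult_sc_left_commute[of "v y"] mult_sc_left_commute[of "vword xs"] mult.assoc)
  also have "\<dots> = sc c * vword (xs @ remove1 y r)"
    using \<open>v y * v y = 1\<close> by simp
  finally have "vword w = sc c * vword (xs @ remove1 y r)" .
  moreover have "set (xs @ remove1 y r) \<subseteq> set w" "length (xs @ remove1 y r) + 2 = length w"
    using set_remove1_subset[of y r] by (auto simp: w r_def length_remove1)
  ultimately show ?thesis by blast
qed

lemma vword_pair_to_front:
  assumes "set w \<subseteq> {1..n}" and "a \<in> set w" "b \<in> set w" "a \<noteq> b"
  shows "\<exists>c. vword w = sc c * vword (a # b # remove1 b (remove1 a w))"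
proof -
  obtain c1 where c1: "vword w = sc c1 * (v a * vword (remove1 a w))"
    using vword_remove1 assms by blast
  obtain c2 where c2: "vword (remove1 a w) = sc c2 * (v b * vword (remove1 b (remove1 a w)))"
    using vword_remove1[of "remove1 a w" b] assms set_remove1_subset[of a w] by auto
  have "vword w = sc (c1 * c2) * vword (a # b # remove1 b (remove1 a w))"
    unfolding c1 c2 by (simp add: mult_sc_left_commute[of "v a"] sc_sc_mult)
  then show ?thesis ..
qed

lemma t_vword_relabel:
  "set w \<subseteq> {1..n} \<Longrightarrow> Suc j \<notin> set w \<Longrightarrow> 1 \<le> j \<Longrightarrow> j < n \<Longrightarrow>
    t j * vword w = vword (map (\<lambda>x. if x = j then Suc j else x) w) * t j"
proof (induction w)
  case (Cons a w)
  define a' where "a' = (if a = j then Suc j else a)"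
  have "t j * v a = v a' * t j"
    using Cons.prems t_v[of j] t_v_commute[of j a] unfolding a'_def by auto
  then have "t j * vword (a # w) = v a' * (t j * vword w)"
    by (simp flip: mult.assoc)
  then show ?case
    using Cons unfolding a'_def by (simp add: mult.assoc)
qed simp

lemma t_vword_commute:
  assumes "set w \<subseteq> {1..n}" "j \<notin> set w" "Suc j \<notin> set w" "1 \<le> j" "j < n"
  shows "t j * vword w = vword w * t j"
proof -
  have "map (\<lambda>x. if x = j then Suc j else x) w = w"
    using assms(2) by (intro map_idI) auto
  then show ?thesis
    using t_vword_relabel[OF assms(1,3-5)] by simp
qed

lemma t_v_v: "1 \<le> j \<Longrightarrow> j < n \<Longrightarrow>
    t j * (v j * v (Suc j)) = sc \<delta> * (v j * v (Suc j)) + sc \<delta> - v j * v (Suc j) * t j"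
proof -
  assume j: "1 \<le> j" "j < n"
  have "t j * (v j * v (Suc j)) = v (Suc j) * (t j * v (Suc j))"
    using j t_v[of j] by (metis mult.assoc)
  also have "\<dots> = v (Suc j) * (v j * t j - sc \<delta> * (v j - v (Suc j)))"
    using j t_v_Suc by simp
  also have "\<dots> = (v (Suc j) * v j) * t j - sc \<delta> * (v (Suc j) * v j) + sc \<delta> * (v (Suc j) * v (Suc j))"
    by (simp add: right_diff_distrib mult_sc_left_commute[of "v (Suc j)"] mult.assoc)
  also have "\<dots> = sc \<delta> * (v j * v (Suc j)) + sc \<delta> - v j * v (Suc j) * t j"
    using j v_anticommute[of "Suc j" j] v_square[of "Suc j"] by simp
  finally show ?thesis .
qed

inductive_set word_span :: "'a \<Rightarrow> bool \<Rightarrow> 'a set" for p :: 'a and e :: bool where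
  vword_mult: "set w \<subseteq> {1..n} \<Longrightarrow> even (length w) = e \<Longrightarrow> vword w * p \<in> word_span p e"
| sc_mult: "x \<in> word_span p e \<Longrightarrow> sc c * x \<in> word_span p e"
| add: "x \<in> word_span p e \<Longrightarrow> y \<in> word_span p e \<Longrightarrow> x + y \<in> word_span p e"

lemma v_mult_word_span: "x \<in> word_span p e \<Longrightarrow> 1 \<le> a \<Longrightarrow> a \<le> n \<Longrightarrow> v a * x \<in> word_span p (\<not> e)"
proof (induction rule: word_span.induct)
  case (vword_mult w)
  then show ?case
    using word_span.vword_mult[of "a # w"] by (simp add: mult.assoc)
qed (simp_all add: mult_sc_left_commute[of "v a"] distrib_left word_span.intros)

context
  fixes p :: 'a
  assumes generic: "\<forall>j. 2 \<le> j \<and> j \<le> n \<longrightarrow> q ^ (2 * j) \<noteq> 1"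
    and p_hecke: "p \<in> hecke_part sc n t"
    and p_idem: "p * p = p"
    and t_mult_p: "\<And>j. 1 \<le> j \<Longrightarrow> j < n \<Longrightarrow> t j * p = sc q * p"
begin

lemma p_mult_t: "1 \<le> j \<Longrightarrow> j < n \<Longrightarrow> p * t j = sc q * p"
  using mult_t_eq_if_t_mult_eq[OF t_mult_p generic p_hecke] by blast

lemma sandwich_lower:
  assumes w: "set w \<subseteq> {1..n}" and l: "l \<in> set w" "2 \<le> l" "l - 1 \<notin> set w"
  shows "p * vword (map (\<lambda>x. if x = l then l - 1 else x) w) * p = p * vword w * p"
proof -
  define j where "j = l - 1"
  define w' where "w' = map (\<lambda>x. if x = l then j else x) w"
  have j: "1 \<le> j" "j < n"
    using w l unfolding j_def by auto
  have "set w' \<subseteq> {1..n}" "Suc j \<notin> set w'"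
    using w l unfolding w'_def j_def by auto
  moreover have "map (\<lambda>x. if x = j then Suc j else x) w' = w"
    unfolding w'_def map_map using l by (intro map_idI) (auto simp: j_def)
  ultimately have "t j * vword w' = vword w * t j"
    using t_vword_relabel[of w' j] j by simp
  have "sc q * (p * vword w' * p) = (p * t j) * vword w' * p"
    using j by (simp add: p_mult_t mult.assoc)
  also have "\<dots> = p * (t j * vword w') * p"
    by (simp only: mult.assoc)
  also have "\<dots> = sc q * (p * vword w * p)"
    using j \<open>t j * vword w' = vword w * t j\<close>
    by (simp add: t_mult_p mult.assoc mult_sc_left_commute[of p] mult_sc_left_commute[of "vword w"])
  finally show ?thesis
    unfolding w'_def j_def using sc_cancel[OF q_nonzero] by metis
qed

lemma sandwich_pair:
  assumes r: "set r \<subseteq> {1..n}" "j \<notin> set r" "Suc j \<notin> set r" and j: "1 \<le> j" "j < n"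
  shows "p * vword (j # Suc j # r) * p = sc (\<delta> / (q + inverse q)) * (p * vword r * p)"
proof -
  define A where "A = v j * v (Suc j)"
  define Y where "Y = p * A * vword r * p"
  define Z where "Z = p * vword r * p"
  have "sc q * Y = (p * t j) * A * vword r * p"
    using p_mult_t j by (simp add: Y_def mult.assoc)
  also have "\<dots> = p * (t j * A) * vword r * p"
    by (simp only: mult.assoc)
  also have "\<dots> = sc \<delta> * Y + sc \<delta> * Z - p * A * (t j * vword r) * p"
    using j t_v_v[of j] unfolding Y_def Z_def A_def[symmetric]
    by (simp add: distrib_left distrib_right left_diff_distrib right_diff_distrib mult.assoc
        mult_sc_left_commute[of p])
  also have "p * A * (t j * vword r) * p = sc q * Y"
    using r j unfolding Y_def
    by (simp add: t_vword_commute t_mult_p mult.assoc mult_sc_left_commute[of p]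
        mult_sc_left_commute[of A] mult_sc_left_commute[of "vword r"])
  finally have "sc q * Y + sc q * Y - sc \<delta> * Y = sc \<delta> * Z"
    by (simp add: algebra_simps)
  moreover have "sc q * Y + sc q * Y - sc \<delta> * Y = sc (q + inverse q) * Y"
    by (simp add: sc_add sc_diff distrib_right left_diff_distrib)
  moreover have "q + inverse q \<noteq> 0"
    using generic j q_nonzero by (intro plus_inverse_nonzero) auto
  ultimately have "Y = sc (\<delta> / (q + inverse q)) * Z"
    by (metis sc_inverse_cancel sc_sc_mult divide_inverse mult.commute)
  then show ?thesis
    unfolding Y_def Z_def A_def by (simp add: mult.assoc)
qed

lemma sandwich_shorten:
  assumes w: "set w \<subseteq> {1..n}" and "\<not> distinct w \<or> 1 \<in> set w \<and> 2 \<in> set w"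
  shows "\<exists>c w'. p * vword w * p = sc c * (p * vword w' * p) \<and> set w' \<subseteq> set w \<and> length w' + 2 = length w"
proof -
  have sandwich_sc: "p * (sc c * x) * p = sc c * (p * x * p)" for c x
    by (simp add: mult_sc_left_commute[of p] mult.assoc)
  show ?thesis
  proof (cases "distinct w")
    case False
    then show ?thesis
      using vword_not_distinct[OF w] sandwich_sc by metis
  next
    case True
    with assms have "1 \<in> set w" "2 \<in> set w"
      by auto
    define r where "r = remove1 2 (remove1 1 w)"
    obtain c where c: "vword w = sc c * vword (1 # Suc 1 # r)"
      using vword_pair_to_front[of w 1 2] w \<open>1 \<in> set w\<close> \<open>2 \<in> set w\<close>
      unfolding r_def by (auto simp: numeral_2_eq_2)
    have "2 \<in> set (remove1 1 w)"
      using \<open>2 \<in> set w\<close> by simp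
    then have "0 < length (remove1 1 w)"
      by (rule length_pos_if_in_set)
    then have r: "set r = set w - {1, 2}" "length r + 2 = length w"
      using True \<open>1 \<in> set w\<close> \<open>2 \<in> set (remove1 1 w)\<close> unfolding r_def
      by (auto simp: length_remove1)
    have "1 < n"
      using w \<open>2 \<in> set w\<close> by auto
    moreover have "set r \<subseteq> {1..n}" "1 \<notin> set r" "Suc 1 \<notin> set r"
      using w r(1) by auto
    ultimately have "p * vword (1 # Suc 1 # r) * p = sc (\<delta> / (q + inverse q)) * (p * vword r * p)"
      using sandwich_pair by simp
    then have "p * vword w * p = sc (c * (\<delta> / (q + inverse q))) * (p * vword r * p)"
      unfolding c sandwich_sc by (simp add: sc_sc_mult)
    then show ?thesis
      using r by blast
  qed
qed

lemma sandwich_vword: "set w \<subseteq> {1..n} \<Longrightarrow> even (length w) \<Longrightarrow> p * vword w * p \<in> complex_line p"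
proof (induction w rule: wf_induct_rule[OF wf_measures[of "[length, sum_list]"], case_names less])
  case (less w)
  consider (nil) "w = []" | (lower) l where "l \<in> set w" "2 \<le> l" "l - 1 \<notin> set w"
    | (shorten) "\<not> distinct w \<or> 1 \<in> set w \<and> 2 \<in> set w"
  proof (cases "w = [] \<or> \<not> distinct w")
    case False
    moreover have "0 \<notin> set w"
      using less.prems(1) by auto
    moreover have "2 \<le> length w" if "w \<noteq> []"
      using that less.prems(2) by (cases "length w") (auto dest: odd_pos)
    ultimately show thesis
      using that one_two_mem_if_downward_closed[of w] by blast
  qed blast
  then show ?case
  proof cases
    case nil
    then show ?thesis
      by (simp add: p_idem self_in_complex_line)
  next
    case lower
    define w' where "w' = map (\<lambda>x. if x = l then l - 1 else x) w"
    have "set w' \<subseteq> {1..n}" "length w' = length w" "sum_list w' < sum_list w"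
      using less.prems(1) lower unfolding w'_def by (auto intro: sum_list_map_less)
    then have "p * vword w' * p \<in> complex_line p"
      using less.IH[of w'] less.prems by simp
    then show ?thesis
      using sandwich_lower[OF less.prems(1) lower] unfolding w'_def by simp
  next
    case shorten
    then obtain c w' where w': "p * vword w * p = sc c * (p * vword w' * p)"
      "set w' \<subseteq> set w" "length w' + 2 = length w"
      using sandwich_shorten less.prems(1) by blast
    have "set w' \<subseteq> {1..n}" "even (length w')"
      using w'(2,3) less.prems by (auto simp flip: w'(3))
    then have "p * vword w' * p \<in> complex_line p"
      using less.IH[of w'] w'(3) by simp
    then show ?thesis
      unfolding w'(1) by (rule sc_mult_in_complex_line)
  qed
qed

lemma t_mult_vword_in_word_span:
  assumes j: "1 \<le> j" "j < n"
  shows "set w \<subseteq> {1..n} \<Longrightarrow> t j * (vword w * p) \<in> word_span p (even (length w))"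
proof (induction w)
  case Nil
  then show ?case
    using j word_span.vword_mult[of "[]" "even 0" p] by (simp add: t_mult_p word_span.sc_mult)
next
  case (Cons a w)
  have a: "1 \<le> a" "a \<le> n" and IH: "t j * (vword w * p) \<in> word_span p (even (length w))"
    using Cons by auto
  have v_IH: "v b * (t j * (vword w * p)) \<in> word_span p (even (length (a # w)))"
    if "1 \<le> b" "b \<le> n" for b
    using v_mult_word_span[OF IH that] by simp
  have word: "vword (b # w) * p \<in> word_span p (even (length (a # w)))"
    if "1 \<le> b" "b \<le> n" for b
    using Cons.prems that by (intro word_span.vword_mult) auto
  have split: "t j * (vword (a # w) * p) = (t j * v a) * (vword w * p)"
    by (simp add: mult.assoc)
  consider "a = j" | "a = Suc j" | "a \<noteq> j" "a \<noteq> Suc j"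
    by blast
  then show ?case
  proof cases
    case 1
    then show ?thesis
      unfolding split using j t_v[of j] v_IH[of "Suc j"] by (simp add: mult.assoc)
  next
    case 2
    then have t_va: "t j * v a = v j * t j - sc \<delta> * (v j - v (Suc j))"
      using j t_v_Suc[of j] by simp
    have "t j * (vword (a # w) * p) = v j * (t j * (vword w * p))
        + sc (- \<delta>) * (vword (j # w) * p) + sc \<delta> * (vword (Suc j # w) * p)"
      unfolding split t_va sc_minus using 2 by (simp add: algebra_simps)
    then show ?thesis
      using j v_IH[of j] word[of j] word[of "Suc j"] by (simp add: word_span.add word_span.sc_mult)
  next
    case 3
    then show ?thesis
      unfolding split using j a t_v_commute[of j a] v_IH[of a] by (simp add: mult.assoc)
  qed
qed

lemma t_mult_word_span: "x \<in> word_span p e \<Longrightarrow> 1 \<le> j \<Longrightarrow> j < n \<Longrightarrow> t j * x \<in> word_span p e"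
proof (induction rule: word_span.induct)
  case (vword_mult w)
  then show ?case
    using t_mult_vword_in_word_span[of j w] by auto
qed (simp_all add: mult_sc_left_commute[of "t j"] distrib_left word_span.intros)

lemma even_part_mult_word_span:
  "x \<in> even_part sc n t v \<Longrightarrow> y \<in> word_span p e \<Longrightarrow> x * y \<in> word_span p e"
proof (induction x arbitrary: y e rule: even_part.induct)
  case (ep_vv j k)
  then show ?case
    using v_mult_word_span[OF v_mult_word_span[OF ep_vv(5), of k], of j] by (simp add: mult.assoc)
qed (simp_all add: word_span.sc_mult t_mult_word_span distrib_right word_span.add mult.assoc)

lemma sandwich_word_span: "y \<in> word_span p True \<Longrightarrow> p * y \<in> complex_line p"
proof (induction y rule: word_span.induct)
  case (vword_mult w)
  then show ?case
    using sandwich_vword by (simp add: mult.assoc)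
qed (simp_all add: mult_sc_left_commute[of p] distrib_left sc_mult_in_complex_line add_in_complex_line)

lemma even_part_sandwich: "x \<in> even_part sc n t v \<Longrightarrow> p * x * p \<in> complex_line p"
  using even_part_mult_word_span[of x p] word_span.vword_mult[of "[]" True p] sandwich_word_span
  by (simp add: mult.assoc)

end

end

lemma hecke_clifford_if_hc_rels:
  assumes alg: "cplx_alg sc" and rels: "hc_rels sc q n t v" and "q \<noteq> 0"
  shows "hecke_clifford sc q n t v"
proof -
  interpret complex_algebra sc
    using alg by unfold_locales
  have "t j * t j = sc (q - inverse q) * t j + 1" if "1 \<le> j" "j < n" for j
    using rels that square_eq_if_right_inverse_diff unfolding hc_rels_def by blast
  then show ?thesis
    using rels \<open>q \<noteq> 0\<close> alg unfolding hc_rels_def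
    by unfold_locales (simp_all add: complex_algebra_def)
qed

lemma hc_rels_minus_inverse: "hc_rels sc (- inverse q) n t v = hc_rels sc q n t v"
proof -
  have "- inverse q - inverse (- inverse q) = q - inverse q"
    by simp
  then show ?thesis
    unfolding hc_rels_def by simp
qed

lemma even_part_sandwich_eq_scalar:
  assumes "cplx_alg sc" "hc_rels sc q n t v" "q \<noteq> 0"
    and "\<forall>j. 2 \<le> j \<and> j \<le> n \<longrightarrow> q ^ (2 * j) \<noteq> 1"
    and "p \<in> hecke_part sc n t" "p * p = p" "\<forall>j. 1 \<le> j \<and> j < n \<longrightarrow> t j * p = sc q * p"
    and "x \<in> even_part sc n t v"
  shows "\<exists>c. p * x * p = sc c * p"
proof -
  interpret hecke_clifford sc q n t v
    using hecke_clifford_if_hc_rels assms(1-3) .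
  show ?thesis
    using even_part_sandwich[of p x] assms(4-8) by (simp add: complex_line_iff)
qed

theorem lemma2p17:
  fixes sc :: "complex \<Rightarrow> 'a::ring_1" and q :: complex and n :: nat
    and t v :: "nat \<Rightarrow> 'a" and p1 p2 :: 'a
  assumes alg: "cplx_alg sc"
    and rels: "hc_rels sc q n t v"
    and q0: "q \<noteq> 0"
    and qroot: "\<forall>j. 2 \<le> j \<and> j \<le> n \<longrightarrow> q ^ (2 * j) \<noteq> 1"
    and p1H: "p1 \<in> hecke_part sc n t" and p1idem: "p1 * p1 = p1"
    and p1t: "\<forall>j. 1 \<le> j \<and> j < n \<longrightarrow> t j * p1 = sc q * p1"
    and p2H: "p2 \<in> hecke_part sc n t" and p2idem: "p2 * p2 = p2"
    and p2t: "\<forall>j. 1 \<le> j \<and> j < n \<longrightarrow> t j * p2 = sc (- inverse q) * p2"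
  shows "(\<forall>x \<in> even_part sc n t v. \<exists>c. p1 * x * p1 = sc c * p1) \<and>
         (\<forall>x \<in> even_part sc n t v. \<exists>c. p2 * x * p2 = sc c * p2)"
proof -
  have "(- inverse q) ^ (2 * j) = inverse (q ^ (2 * j))" for j
    by (simp add: power_mult power_inverse)
  then have qroot': "\<forall>j. 2 \<le> j \<and> j \<le> n \<longrightarrow> (- inverse q) ^ (2 * j) \<noteq> 1"
    using qroot by simp
  have rels': "hc_rels sc (- inverse q) n t v"
    using rels hc_rels_minus_inverse by blast
  show ?thesis
    using even_part_sandwich_eq_scalar[OF alg rels q0 qroot p1H p1idem p1t]
      even_part_sandwich_eq_scalar[OF alg rels' _ qroot' p2H p2idem p2t] q0
    by simp
qed

end
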